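(* Let $k_1<k_2$ be integers with $k_1\ge 3$, and let $n$ be a positive integer. If $\nu_{k_2}(n+k_2-3)=0$, then $\nu_{k_1}(n+k_1-3)=0$.
   Context: For an integer $k\ge 3$ and a positive integer $m$, $\nu_k(m)$ denotes the number of $k$-tuples of integers $(x_1,\dots,x_k)$ with $1\le x_1\le x_2\le\dots\le x_k$ such that $x_1x_2\cdots x_k+x_1+x_2+\dots+x_k=m$. *)

theory Defs
  imports Main
begin

definition nu :: "nat \<Rightarrow> nat \<Rightarrow> nat" where
  "nu k m = card {xs :: nat list. length xs = k \<and> sorted xs \<and> (\<forall>x\<in>set xs. 1 \<le> x)
                    \<and> prod_list xs + sum_list xs = m}"

end

theory Submission
  imports Defs
begin

text \<open>Prepending ones to a solution leaves the product unchanged and raises the sum by one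
  per entry, so \<open>xs \<mapsto> replicate j 1 @ xs\<close> injects the solutions counted by \<open>nu k m\<close>
  into those counted by \<open>nu (k + j) (m + j)\<close>.\<close>

definition nu_tuples :: "nat \<Rightarrow> nat \<Rightarrow> nat list set" where
  "nu_tuples k m = {xs. length xs = k \<and> sorted xs \<and> (\<forall>x\<in>set xs. 1 \<le> x)
                        \<and> prod_list xs + sum_list xs = m}"

lemma nu_eq_card_nu_tuples: "nu k m = card (nu_tuples k m)"
  by (simp add: nu_def nu_tuples_def)

lemma finite_nu_tuples: "finite (nu_tuples k m)"
proof (rule finite_subset)
  show "nu_tuples k m \<subseteq> {xs. set xs \<subseteq> {..m} \<and> length xs = k}"
  proof
    fix xs assume "xs \<in> nu_tuples k m"
    then have "length xs = k" and sum: "prod_list xs + sum_list xs = m"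
      by (auto simp: nu_tuples_def)
    moreover have "x \<le> m" if "x \<in> set xs" for x
      using member_le_sum_list[OF that] sum by linarith
    ultimately show "xs \<in> {xs. set xs \<subseteq> {..m} \<and> length xs = k}" by auto
  qed
  show "finite {xs. set xs \<subseteq> {..m} \<and> length xs = (k::nat)}"
    by (rule finite_lists_length_eq) simp
qed

lemma replicate_one_append_in_nu_tuples:
  assumes "xs \<in> nu_tuples k m"
  shows "replicate j 1 @ xs \<in> nu_tuples (k + j) (m + j)"
proof -
  have "sum_list (replicate j (1::nat)) = j"
    by (induction j) simp_all
  with assms show ?thesis
    by (auto simp: nu_tuples_def sorted_append)
qed

lemma nu_le_nu_add: "nu k m \<le> nu (k + j) (m + j)"
  unfolding nu_eq_card_nu_tuples
proof (rule card_inj_on_le)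
  show "inj_on ((@) (replicate j 1)) (nu_tuples k m)"
    by (rule inj_onI) simp
  show "(@) (replicate j 1) ` nu_tuples k m \<subseteq> nu_tuples (k + j) (m + j)"
    using replicate_one_append_in_nu_tuples by blast
qed (rule finite_nu_tuples)

theorem corollary2:
  fixes k1 k2 n :: nat
  assumes "3 \<le> k1" and "k1 < k2" and "0 < n"
    and "nu k2 (n + k2 - 3) = 0"
  shows "nu k1 (n + k1 - 3) = 0"
proof -
  define j where "j = k2 - k1"
  have "k2 = k1 + j" and "n + k2 - 3 = (n + k1 - 3) + j"
    using assms(1,2) by (simp_all add: j_def)
  then have "nu k1 (n + k1 - 3) \<le> nu k2 (n + k2 - 3)"
    by (simp only: nu_le_nu_add)
  with assms(4) show ?thesis by simp
qed

end
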